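(* In the setting of the context, let $(e_i)_{i=1}^d$ be an orthonormal basis of $\mathbb C^d$ and assume: for each $a\in\mathcal A$ there is a deterministic map $f_a:\{1,\dots,d\}\to\{1,\dots,d\}$ such that for $\mathbb P$-a.e. $\omega$ and every $i$, $V_{a;\omega}e_i\in\mathbb C e_{f_a(i)}$, and $\langle V_{a;\omega}e_i,V_{a;\omega}e_j\rangle=0$ whenever $i\ne j$. Suppose there exist $L\in\mathbb N$ and $\varepsilon>0$ such that for $\mathbb P$-a.e. $\omega$ and all $i,j\in\{1,\dots,d\}$, $$\sum_{k=1}^d\min\{\overline P^{(L)}_\omega(i,k),\overline P^{(L)}_\omega(j,k)\}\ge\varepsilon,$$ where $P^{(L)}_{\omega,i}:=\mathbb Q_{\rho^{(i)};\omega}\circ A_{1:L}^{-1}\in\mathcal P(\mathcal A^L)$ with $\rho^{(i)}=|e_i\rangle\langle e_i|$, and $\overline P^{(L)}_\omega(i,k):=\sum_{u\in\mathcal A^L:f_u(i)=k}P^{(L)}_{\omega,i}(u)$. Then there exist, for each $(i,j)\in\{1,\dots,d\}^2$, $\mathcal F$-measurable maps $\omega\mapsto\kappa_{\omega;i,j}\in\mathcal P(\mathcal A^L\times\mathcal A^L)$ such that for $\mathbb P$-a.e. $\omega$ and all $i,j$, $\kappa_{\omega;i,j}$ is a coupling of $\mathbb Q_{\rho^{(i)};\omega}\circ A_{1:L}^{-1}$ and $\mathbb Q_{\rho^{(j)};\omega}\circ A_{1:L}^{-1}$ and $$\kappa_{\omega;i,j}\big(\{(u,v)\in\mathcal A^L\times\mathcal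 A^L: f_u(i)=f_v(j)\}\big)\ge\varepsilon$$ (with the same $L$ and $\varepsilon$).
   Context: Let $d\in\mathbb N$, $\mathcal A$ a finite set, $(\mathcal A^{\mathbb N},\Sigma)$ the sequence space with product $\sigma$-algebra, coordinates $A_n(\bar a)=a_n$ and $A_{1:L}=(A_1,\dots,A_L)$. $(\Omega,\mathcal F,\mathbb P)$ is a probability space and $\theta:\Omega\to\Omega$ is measurable and $\mathbb P$-preserving. For each $a\in\mathcal A$, $\omega\mapsto V_{a;\omega}\in M_d(\mathbb C)$ is measurable with $\sum_aV_{a;\omega}^*V_{a;\omega}=I$ $\mathbb P$-a.s.; $\mathcal T_{a;\omega}(X)=V_{a;\omega}XV_{a;\omega}^*$. For a density matrix $\rho$, the quenched law $\mathbb Q_{\rho;\omega}$ is the probability on $\Sigma$ with $\mathbb Q_{\rho;\omega}(A_1=a_1,\dots,A_n=a_n)=\operatorname{tr}[(\mathcal T_{a_n;\theta^n\omega}\circ\cdots\circ\mathcal T_{a_1;\theta\omega})(\rho)]$. For a word $u=(u_1,\dots,u_L)$, $f_u:=f_{u_L}\circ\cdots\circ f_{u_1}$. $\mathcal P(X)$ denotes the probability measures on a finite set $X$; a coupling of $\mu,\nu$ is a probability on the product with marginals $\mu$ and $\nu$. *)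

theory Defs
  imports "HOL-Probability.Probability"
begin

text \<open>Complex d x d matrices are rendered as complex^'n^'n with a finite index
type 'n (so d = CARD('n)); the alphabet is a finite type 'a.\<close>

definition cadj :: "complex^'n^'m \<Rightarrow> complex^'m^'n" where
  "cadj A = (\<chi> i j. cnj (A $ j $ i))"

definition ctrace :: "complex^'n^'n \<Rightarrow> complex" where
  "ctrace A = (\<Sum>i\<in>UNIV. A $ i $ i)"

definition hinner :: "complex^'n \<Rightarrow> complex^'n \<Rightarrow> complex" where
  "hinner x y = (\<Sum>k\<in>UNIV. cnj (x $ k) * y $ k)"

definition proj :: "complex^'n \<Rightarrow> complex^'n^'n" where
  "proj e = (\<chi> r s. e $ r * cnj (e $ s))"

definition kraus :: "('a \<Rightarrow> 'w \<Rightarrow> complex^'n^'n) \<Rightarrow> 'a \<Rightarrow> 'w \<Rightarrow> complex^'n^'n \<Rightarrow> complex^'n^'n" where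
  "kraus V a w X = V a w ** X ** cadj (V a w)"

text \<open>qevol V th w n u rho applies T_{u_1; th^(n+1) w}, then T_{u_2; th^(n+2) w}, ...\<close>
fun qevol :: "('a \<Rightarrow> 'w \<Rightarrow> complex^'n^'n) \<Rightarrow> ('w \<Rightarrow> 'w) \<Rightarrow> 'w \<Rightarrow> nat \<Rightarrow> 'a list
    \<Rightarrow> complex^'n^'n \<Rightarrow> complex^'n^'n" where
  "qevol V th w n [] rho = rho"
| "qevol V th w n (a # u) rho = qevol V th w (Suc n) u (kraus V a ((th ^^ Suc n) w) rho)"

text \<open>Quenched law of the first length u letters:
  Q_{rho;w}(A_1 = u_1, ..., A_n = u_n) = tr[(T_{u_n;th^n w} o ... o T_{u_1;th w})(rho)].
  (The trace is real under the standing assumptions; we take its real part.)\<close>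
definition qlaw :: "('a \<Rightarrow> 'w \<Rightarrow> complex^'n^'n) \<Rightarrow> ('w \<Rightarrow> 'w) \<Rightarrow> complex^'n^'n \<Rightarrow> 'w \<Rightarrow> 'a list \<Rightarrow> real" where
  "qlaw V th rho w u = Re (ctrace (qevol V th w 0 u rho))"

definition words :: "nat \<Rightarrow> 'a list set" where
  "words L = {u. length u = L}"

definition fword :: "('a \<Rightarrow> 'n \<Rightarrow> 'n) \<Rightarrow> 'a list \<Rightarrow> 'n \<Rightarrow> 'n" where
  "fword f u i = foldl (\<lambda>k a. f a k) i u"

definition Pbar :: "('a \<Rightarrow> 'w \<Rightarrow> complex^'n^'n) \<Rightarrow> ('w \<Rightarrow> 'w) \<Rightarrow> ('n \<Rightarrow> complex^'n)
    \<Rightarrow> ('a \<Rightarrow> 'n \<Rightarrow> 'n) \<Rightarrow> nat \<Rightarrow> 'w \<Rightarrow> 'n \<Rightarrow> 'n \<Rightarrow> real" where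
  "Pbar V th e f L w i k = (\<Sum>u\<in>{u\<in>words L. fword f u i = k}. qlaw V th (proj (e i)) w u)"

end

(*
  Write P_i for the law of the first L letters started from e_i, g_i u = f_u(i), and
  p_i = g_i(P_i) = Pbar(i, -). The classical maximal coupling of p_i and p_j puts mass
  sum_k min (p_i k) (p_j k) >= eps on the diagonal. It is lifted to words by drawing,
  given a coupled pair (k, l), a word u from P_i conditioned on g_i u = k and a word v
  from P_j conditioned on g_j v = l. The resulting law has marginals P_i and P_j and its
  image under (u, v) |-> (g_i u, g_j v) is the maximal coupling, so {g_i u = g_j v} has
  mass >= eps. Almost surely P_i is a probability on A^L, because the Kraus maps are
  trace preserving along the whole theta-orbit; and the coupling is an explicit
  expression in finitely many quenched probabilities, hence measurable in omega.
*)
theory Submission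
  imports Defs
begin

lemma pmf_embed_pmf_finite:
  assumes "finite S" and "\<And>x. 0 \<le> f x" and "\<And>x. x \<notin> S \<Longrightarrow> f x = 0" and "sum f S = 1"
  shows "pmf (embed_pmf f) x = f x"
proof (rule pmf_embed_pmf)
  have "(\<integral>\<^sup>+x. ennreal (f x) \<partial>count_space UNIV) = (\<Sum>x\<in>S. ennreal (f x))"
    using assms(1,3) by (intro nn_integral_count_space') auto
  also have "\<dots> = 1"
    using assms(2,4) by (subst sum_ennreal) auto
  finally show "(\<integral>\<^sup>+x. ennreal (f x) \<partial>count_space UNIV) = 1" .
qed (use assms(2) in auto)

lemma measure_pmf_finite_support:
  assumes "set_pmf p \<subseteq> B" and "finite B"
  shows "measure_pmf.prob p A = sum (pmf p) (A \<inter> B)"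
proof -
  have "measure_pmf.prob p A = measure_pmf.prob p (A \<inter> B \<inter> set_pmf p)"
    using assms(1) by (metis inf.absorb_iff2 inf_assoc measure_Int_set_pmf)
  also have "\<dots> = sum (pmf p) (A \<inter> B)"
    using assms(2) by (simp add: measure_Int_set_pmf measure_measure_pmf_finite)
  finally show ?thesis .
qed

section \<open>Maximal couplings on a finite type\<close>

definition overlap :: "('k::finite \<Rightarrow> real) \<Rightarrow> ('k \<Rightarrow> real) \<Rightarrow> real" where
  "overlap p q = (\<Sum>k\<in>UNIV. min (p k) (q k))"

(* When overlap p q = 1 the division by zero yields 0; this is harmless, because then
   p = q and the excess factors vanish. *)
definition max_coupling_weight :: "('k::finite \<Rightarrow> real) \<Rightarrow> ('k \<Rightarrow> real) \<Rightarrow> 'k \<times> 'k \<Rightarrow> real" where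
  "max_coupling_weight p q = (\<lambda>(k, l). (if k = l then min (p k) (q k) else 0)
     + (p k - min (p k) (q k)) * (q l - min (p l) (q l)) / (1 - overlap p q))"

definition max_coupling :: "'k::finite pmf \<Rightarrow> 'k pmf \<Rightarrow> ('k \<times> 'k) pmf" where
  "max_coupling p q = embed_pmf (max_coupling_weight (pmf p) (pmf q))"

lemma overlap_commute: "overlap q p = overlap p q"
  by (simp add: overlap_def min.commute)

lemma max_coupling_weight_swap: "max_coupling_weight q p (l, k) = max_coupling_weight p q (k, l)"
  by (simp add: max_coupling_weight_def overlap_commute min.commute mult.commute)

lemma overlap_le_one: "overlap (pmf p) (pmf q) \<le> 1"
proof -
  have "overlap (pmf p) (pmf q) \<le> (\<Sum>k\<in>UNIV. pmf p k)"
    unfolding overlap_def by (intro sum_mono) simp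
  also have "\<dots> = 1" by (simp add: sum_pmf_eq_1)
  finally show ?thesis .
qed

lemma max_coupling_weight_nonneg: "0 \<le> max_coupling_weight (pmf p) (pmf q) x"
  using overlap_le_one[of p q]
  by (cases x) (auto simp: max_coupling_weight_def intro!: add_nonneg_nonneg divide_nonneg_nonneg mult_nonneg_nonneg)

lemma sum_max_coupling_weight_row:
  "(\<Sum>l\<in>UNIV. max_coupling_weight (pmf p) (pmf q) (k, l)) = pmf p k"
proof -
  let ?m = "\<lambda>k. min (pmf p k) (pmf q k)" and ?c = "overlap (pmf p) (pmf q)"
  have excess: "(\<Sum>l\<in>UNIV. pmf p l - ?m l) = 1 - ?c" "(\<Sum>l\<in>UNIV. pmf q l - ?m l) = 1 - ?c"
    by (simp_all add: sum_subtractf overlap_def sum_pmf_eq_1)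
  have "(\<Sum>l\<in>UNIV. max_coupling_weight (pmf p) (pmf q) (k, l))
      = (\<Sum>l\<in>UNIV. if k = l then ?m k else 0) + (\<Sum>l\<in>UNIV. (pmf p k - ?m k) * (pmf q l - ?m l) / (1 - ?c))"
    by (simp add: max_coupling_weight_def sum.distrib)
  also have "\<dots> = ?m k + (pmf p k - ?m k) * (\<Sum>l\<in>UNIV. pmf q l - ?m l) / (1 - ?c)"
    by (simp add: sum_distrib_left sum_divide_distrib)
  also have "\<dots> = ?m k + (pmf p k - ?m k) * (1 - ?c) / (1 - ?c)"
    by (simp only: excess)
  also have "\<dots> = pmf p k"
  proof (cases "?c = 1")
    case True
    have "\<forall>l\<in>UNIV. pmf p l - ?m l = 0"
      using sum_nonneg_eq_0_iff[of UNIV "\<lambda>l. pmf p l - ?m l"] excess(1) True by simp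
    then show ?thesis by simp
  qed simp
  finally show ?thesis .
qed

lemma pmf_max_coupling: "pmf (max_coupling p q) x = max_coupling_weight (pmf p) (pmf q) x"
  unfolding max_coupling_def
proof (rule pmf_embed_pmf_finite[where S = UNIV])
  have "sum (max_coupling_weight (pmf p) (pmf q)) UNIV
      = (\<Sum>k\<in>UNIV. \<Sum>l\<in>UNIV. max_coupling_weight (pmf p) (pmf q) (k, l))"
    by (simp add: sum.cartesian_product flip: UNIV_Times_UNIV)
  then show "sum (max_coupling_weight (pmf p) (pmf q)) UNIV = 1"
    by (simp add: sum_max_coupling_weight_row sum_pmf_eq_1)
qed (auto intro: max_coupling_weight_nonneg)

lemma max_coupling_swap:
  fixes p q :: "'k::finite pmf"
  shows "max_coupling q p = map_pmf prod.swap (max_coupling p q)"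
proof (rule pmf_eqI)
  fix x :: "'k \<times> 'k"
  obtain k l where x: "x = prod.swap (k, l)" by (cases x) simp
  have "pmf (map_pmf prod.swap (max_coupling p q)) (prod.swap (k, l)) = pmf (max_coupling p q) (k, l)"
    by (rule pmf_map_inj') simp
  then show "pmf (max_coupling q p) x = pmf (map_pmf prod.swap (max_coupling p q)) x"
    by (simp add: x pmf_max_coupling max_coupling_weight_swap)
qed

lemma map_fst_max_coupling:
  fixes p q :: "'k::finite pmf"
  shows "map_pmf fst (max_coupling p q) = p"
proof (rule pmf_eqI)
  fix k :: 'k
  have fibre: "fst -` {k} = range (Pair k)" by auto
  have "pmf (map_pmf fst (max_coupling p q)) k = (\<Sum>l\<in>UNIV. pmf (max_coupling p q) (k, l))"
    unfolding pmf_map fibre by (simp add: measure_measure_pmf_finite sum.reindex inj_on_def)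
  then show "pmf (map_pmf fst (max_coupling p q)) k = pmf p k"
    by (simp add: pmf_max_coupling sum_max_coupling_weight_row)
qed

lemma map_snd_max_coupling: "map_pmf snd (max_coupling p q) = q"
proof -
  have "map_pmf snd (max_coupling p q) = map_pmf fst (map_pmf prod.swap (max_coupling p q))"
    by (simp add: pmf.map_comp comp_def)
  then show ?thesis
    by (simp add: map_fst_max_coupling flip: max_coupling_swap)
qed

lemma overlap_le_max_coupling_diagonal:
  fixes p q :: "'k::finite pmf"
  shows "overlap (pmf p) (pmf q) \<le> measure_pmf.prob (max_coupling p q) {(k, l). k = l}"
proof -
  have diag: "{(k, l). k = l} = (\<lambda>k. (k, k)) ` (UNIV :: 'k set)" by auto
  have "overlap (pmf p) (pmf q) \<le> (\<Sum>k\<in>UNIV. max_coupling_weight (pmf p) (pmf q) (k, k))"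
    unfolding overlap_def using overlap_le_one[of p q]
    by (intro sum_mono) (auto simp: max_coupling_weight_def intro!: divide_nonneg_nonneg mult_nonneg_nonneg)
  also have "\<dots> = measure_pmf.prob (max_coupling p q) {(k, l). k = l}"
    by (simp add: diag measure_measure_pmf_finite sum.reindex inj_on_def pmf_max_coupling)
  finally show ?thesis .
qed

section \<open>Lifting couplings along fibres\<close>

lemma bind_cond_pmf_fibres: "bind_pmf (map_pmf g P) (\<lambda>k. cond_pmf P {u. g u = k}) = P"
  by (rule bind_cond_pmf_cancel) (auto simp: vimage_def)

definition lift_coupling :: "('k \<times> 'l) pmf \<Rightarrow> ('x \<Rightarrow> 'k) \<Rightarrow> 'x pmf \<Rightarrow> ('y \<Rightarrow> 'l) \<Rightarrow> 'y pmf \<Rightarrow> ('x \<times> 'y) pmf" where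
  "lift_coupling C g P h Q =
     bind_pmf C (\<lambda>(k, l). pair_pmf (cond_pmf P {u. g u = k}) (cond_pmf Q {v. h v = l}))"

context
  fixes C :: "('k \<times> 'l) pmf" and g :: "'x \<Rightarrow> 'k" and P :: "'x pmf" and h :: "'y \<Rightarrow> 'l" and Q :: "'y pmf"
  assumes map_fst_C: "map_pmf fst C = map_pmf g P" and map_snd_C: "map_pmf snd C = map_pmf h Q"
begin

lemma fibres_nonempty:
  assumes "(k, l) \<in> set_pmf C"
  shows "set_pmf P \<inter> {u. g u = k} \<noteq> {}" and "set_pmf Q \<inter> {v. h v = l} \<noteq> {}"
proof -
  have "k \<in> set_pmf (map_pmf fst C)" and "l \<in> set_pmf (map_pmf snd C)"
    using assms by force+
  then show "set_pmf P \<inter> {u. g u = k} \<noteq> {}" and "set_pmf Q \<inter> {v. h v = l} \<noteq> {}"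
    unfolding map_fst_C map_snd_C by auto
qed

lemma map_fst_lift_coupling: "map_pmf fst (lift_coupling C g P h Q) = P"
proof -
  have "map_pmf fst (lift_coupling C g P h Q) = bind_pmf C (\<lambda>x. cond_pmf P {u. g u = fst x})"
    by (simp add: lift_coupling_def map_bind_pmf split_def map_fst_pair_pmf map_snd_pair_pmf)
  also have "\<dots> = bind_pmf (map_pmf fst C) (\<lambda>k. cond_pmf P {u. g u = k})"
    by (simp add: bind_map_pmf)
  also have "\<dots> = P"
    by (simp only: map_fst_C bind_cond_pmf_fibres)
  finally show ?thesis .
qed

lemma map_snd_lift_coupling: "map_pmf snd (lift_coupling C g P h Q) = Q"
proof -
  have "map_pmf snd (lift_coupling C g P h Q) = bind_pmf C (\<lambda>x. cond_pmf Q {v. h v = snd x})"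
    by (simp add: lift_coupling_def map_bind_pmf split_def map_fst_pair_pmf map_snd_pair_pmf)
  also have "\<dots> = bind_pmf (map_pmf snd C) (\<lambda>k. cond_pmf Q {v. h v = k})"
    by (simp add: bind_map_pmf)
  also have "\<dots> = Q"
    by (simp only: map_snd_C bind_cond_pmf_fibres)
  finally show ?thesis .
qed

lemma map_lift_coupling: "map_pmf (\<lambda>(u, v). (g u, h v)) (lift_coupling C g P h Q) = C"
proof -
  have "map_pmf (\<lambda>(u, v). (g u, h v)) (lift_coupling C g P h Q) = bind_pmf C return_pmf"
    unfolding lift_coupling_def map_bind_pmf
  proof (rule bind_pmf_cong)
    fix x assume "x \<in> set_pmf C"
    moreover obtain k l where x: "x = (k, l)" by (cases x)
    ultimately have "map_pmf g (cond_pmf P {u. g u = k}) = return_pmf k"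
      and "map_pmf h (cond_pmf Q {v. h v = l}) = return_pmf l"
      using fibres_nonempty by (auto simp: map_pmf_eq_return_pmf_iff)
    then show "map_pmf (\<lambda>(u, v). (g u, h v))
        ((\<lambda>(k, l). pair_pmf (cond_pmf P {u. g u = k}) (cond_pmf Q {v. h v = l})) x) = return_pmf x"
      by (simp add: x map_pair)
  qed simp
  then show ?thesis by (simp add: bind_return_pmf')
qed

lemma pmf_lift_coupling:
  "pmf (lift_coupling C g P h Q) (u, v)
     = pmf C (g u, h v) * (pmf P u / pmf (map_pmf g P) (g u)) * (pmf Q v / pmf (map_pmf h Q) (h v))"
proof -
  let ?F = "\<lambda>(k, l). pair_pmf (cond_pmf P {u. g u = k}) (cond_pmf Q {v. h v = l})"
  have fibre_mass_P: "measure_pmf.prob P {u. g u = k} = pmf (map_pmf g P) k"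
    and fibre_mass_Q: "measure_pmf.prob Q {v. h v = l} = pmf (map_pmf h Q) l" for k l
    by (simp_all add: pmf_map vimage_def)
  have pmf_F: "pmf (?F x) (u, v) = (if x = (g u, h v) then
        pmf P u / pmf (map_pmf g P) (g u) * (pmf Q v / pmf (map_pmf h Q) (h v)) else 0)"
    if "x \<in> set_pmf C" for x
  proof -
    obtain k l where x: "x = (k, l)" by (cases x)
    show ?thesis
      using fibres_nonempty[OF that[unfolded x]] fibre_mass_P fibre_mass_Q
      by (auto simp: x pmf_pair pmf_cond)
  qed
  have "pmf (lift_coupling C g P h Q) (u, v) = (\<integral>x. pmf (?F x) (u, v) \<partial>C)"
    by (simp add: lift_coupling_def pmf_bind)
  also have "\<dots> = (\<Sum>x\<in>{(g u, h v)}. pmf (?F x) (u, v) * pmf C x)"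
  proof (rule integral_measure_pmf_real)
    fix x assume "x \<in> set_pmf C" and "pmf (?F x) (u, v) \<noteq> 0"
    then show "x \<in> {(g u, h v)}"
      by (simp add: pmf_F split: if_splits)
  qed simp
  also have "\<dots> = pmf C (g u, h v) * (pmf P u / pmf (map_pmf g P) (g u)) * (pmf Q v / pmf (map_pmf h Q) (h v))"
  proof (cases "(g u, h v) \<in> set_pmf C")
    case True
    then show ?thesis using pmf_F[OF True] by simp
  qed (simp add: set_pmf_iff)
  finally show ?thesis .
qed

end

lemma measure_lift_coupling_diagonal:
  assumes "map_pmf fst C = map_pmf g P" and "map_pmf snd C = map_pmf h Q"
  shows "measure_pmf.prob (lift_coupling C g P h Q) {(u, v). g u = h v} = measure_pmf.prob C {(k, l). k = l}"
proof -
  have "measure_pmf.prob C {(k, l). k = l}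
      = measure_pmf.prob (map_pmf (\<lambda>(u, v). (g u, h v)) (lift_coupling C g P h Q)) {(k, l). k = l}"
    by (simp only: map_lift_coupling[OF assms])
  also have "\<dots> = measure_pmf.prob (lift_coupling C g P h Q) {(u, v). g u = h v}"
    by (simp add: vimage_def case_prod_unfold)
  finally show ?thesis ..
qed

definition max_fibre_coupling :: "('x \<Rightarrow> 'k::finite) \<Rightarrow> 'x pmf \<Rightarrow> ('y \<Rightarrow> 'k) \<Rightarrow> 'y pmf \<Rightarrow> ('x \<times> 'y) pmf" where
  "max_fibre_coupling g P h Q = lift_coupling (max_coupling (map_pmf g P) (map_pmf h Q)) g P h Q"

lemma map_fst_max_fibre_coupling: "map_pmf fst (max_fibre_coupling g P h Q) = P"
  unfolding max_fibre_coupling_def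
  by (intro map_fst_lift_coupling map_fst_max_coupling map_snd_max_coupling)

lemma map_snd_max_fibre_coupling: "map_pmf snd (max_fibre_coupling g P h Q) = Q"
  unfolding max_fibre_coupling_def
  by (intro map_snd_lift_coupling map_fst_max_coupling map_snd_max_coupling)

lemma overlap_le_max_fibre_coupling:
  "overlap (pmf (map_pmf g P)) (pmf (map_pmf h Q))
     \<le> measure_pmf.prob (max_fibre_coupling g P h Q) {(u, v). g u = h v}"
  unfolding max_fibre_coupling_def
  by (simp add: measure_lift_coupling_diagonal map_fst_max_coupling map_snd_max_coupling
      overlap_le_max_coupling_diagonal)

lemma pmf_max_fibre_coupling:
  "pmf (max_fibre_coupling g P h Q) (u, v)
     = max_coupling_weight (pmf (map_pmf g P)) (pmf (map_pmf h Q)) (g u, h v)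
       * (pmf P u / pmf (map_pmf g P) (g u)) * (pmf Q v / pmf (map_pmf h Q) (h v))"
  unfolding max_fibre_coupling_def
  by (simp add: pmf_lift_coupling map_fst_max_coupling map_snd_max_coupling pmf_max_coupling)

section \<open>Iterates of a measure-preserving map\<close>

lemma measurable_funpow: "f \<in> measurable M M \<Longrightarrow> f ^^ n \<in> measurable M M"
  by (induction n) (auto simp: funpow_Suc_right simp del: funpow.simps intro: measurable_comp)

lemma distr_funpow:
  assumes "f \<in> measurable M M" and "distr M M f = M"
  shows "distr M M (f ^^ n) = M"
proof (induction n)
  case (Suc n)
  have "distr M M (f ^^ Suc n) = distr (distr M M f) M (f ^^ n)"
    using assms(1) measurable_funpow[OF assms(1)]
    by (simp add: distr_distr funpow_Suc_right del: funpow.simps)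
  then show ?case using Suc assms(2) by (simp del: funpow.simps)
qed (simp add: distr_id2 id_def)

lemma AE_funpow:
  assumes "f \<in> measurable M M" and "distr M M f = M" and "AE x in M. P x"
  shows "AE x in M. \<forall>n. P ((f ^^ n) x)"
  unfolding AE_all_countable
proof
  fix n
  have "AE x in distr M M (f ^^ n). P x"
    using assms(3) by (simp only: distr_funpow[OF assms(1,2)])
  then show "AE x in M. P ((f ^^ n) x)"
    by (rule AE_distrD[OF measurable_funpow[OF assms(1)]])
qed

section \<open>Quenched laws of words\<close>

lemma ctrace_eq_trace: "ctrace A = trace A"
  by (simp add: ctrace_def trace_def)

lemma kraus_proj: "kraus V a w (proj x) = proj (V a w *v x)"
  unfolding kraus_def proj_def cadj_def
  by (simp add: vec_eq_iff matrix_matrix_mult_def matrix_vector_mult_def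
      sum_distrib_left sum_distrib_right sum_product mult_ac)

lemma qevol_proj: "\<exists>y. qevol V th w n u (proj x) = proj y"
  by (induction u arbitrary: n x) (auto simp: kraus_proj)

lemma ctrace_proj: "ctrace (proj x) = hinner x x"
  by (simp add: ctrace_def proj_def hinner_def mult.commute)

lemma qlaw_proj_nonneg: "0 \<le> qlaw V th (proj x) w u"
proof -
  obtain y where y: "qevol V th w 0 u (proj x) = proj y"
    using qevol_proj[of V th w 0 u x] by blast
  show ?thesis
    by (auto simp: qlaw_def y ctrace_proj hinner_def intro!: sum_nonneg)
qed

lemma trace_mult_sum:
  fixes X :: "'a::comm_semiring_1^'n^'n"
  shows "trace (X ** sum B A) = (\<Sum>a\<in>A. trace (X ** B a))"
  by (induction A rule: infinite_finite_induct)
     (simp_all add: matrix_add_ldistrib trace_add trace_0[unfolded mat_0])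

lemma sum_ctrace_kraus:
  assumes "(\<Sum>a\<in>UNIV. cadj (V a w) ** V a w) = mat 1"
  shows "(\<Sum>a\<in>UNIV. ctrace (kraus V a w X)) = ctrace X"
proof -
  have "(\<Sum>a\<in>UNIV. ctrace (kraus V a w X)) = (\<Sum>a\<in>UNIV. trace ((cadj (V a w) ** V a w) ** X))"
    by (simp add: ctrace_eq_trace kraus_def trace_mul_sym[of "V _ w ** X"] matrix_mul_assoc)
  also have "\<dots> = (\<Sum>a\<in>UNIV. trace (X ** (cadj (V a w) ** V a w)))"
    by (simp only: trace_mul_sym[of _ X])
  also have "\<dots> = trace (X ** (\<Sum>a\<in>UNIV. cadj (V a w) ** V a w))"
    by (simp only: trace_mult_sum)
  finally show ?thesis by (simp add: assms ctrace_eq_trace)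
qed

lemma finite_words: "finite (words L :: 'a::finite list set)"
  unfolding words_def by (rule finite_list_length)

lemma sum_words_Suc: "(\<Sum>u\<in>words (Suc L). F u) = (\<Sum>a\<in>(UNIV::'a::finite set). \<Sum>u\<in>words L. F (a # u))"
proof -
  have words: "words (Suc L) = (\<lambda>(a, u). a # u) ` (UNIV \<times> words L)"
    unfolding words_def by (auto simp: image_iff length_Suc_conv)
  have inj: "inj_on (\<lambda>(a, u). a # u) (UNIV \<times> words L)" by (auto simp: inj_on_def)
  have "(\<Sum>u\<in>words (Suc L). F u) = (\<Sum>(a, u)\<in>UNIV \<times> words L. F (a # u))"
    unfolding words using sum.reindex[OF inj, of F] by (simp add: comp_def case_prod_unfold)
  then show ?thesis by (simp add: sum.cartesian_product)
qed

lemma sum_ctrace_qevol_words: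
  fixes V :: "'a::finite \<Rightarrow> 'w \<Rightarrow> complex^'n^'n"
  assumes "\<And>m. (\<Sum>a\<in>UNIV. cadj (V a ((th ^^ m) w)) ** V a ((th ^^ m) w)) = mat 1"
  shows "(\<Sum>u\<in>words L. ctrace (qevol V th w n u X)) = ctrace X"
proof (induction L arbitrary: n X)
  case 0
  then show ?case by (simp add: words_def)
next
  case (Suc L)
  then show ?case
    by (simp add: sum_words_Suc sum_ctrace_kraus assms del: funpow.simps)
qed

lemma sum_qlaw_words:
  fixes V :: "'a::finite \<Rightarrow> 'w \<Rightarrow> complex^'n^'n"
  assumes "\<And>m. (\<Sum>a\<in>UNIV. cadj (V a ((th ^^ m) w)) ** V a ((th ^^ m) w)) = mat 1"
  shows "(\<Sum>u\<in>words L. qlaw V th rho w u) = Re (ctrace rho)"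
  by (simp add: qlaw_def sum_ctrace_qevol_words assms flip: Re_sum)

lemma borel_measurable_matrix_entry:
  fixes X :: "'w \<Rightarrow> 'b::real_normed_vector^'n^'m"
  assumes "X \<in> borel_measurable M"
  shows "(\<lambda>w. X w $ r $ s) \<in> borel_measurable M"
  using borel_measurable_continuous_on[OF _ assms, of "\<lambda>A. A $ r $ s"]
  by (simp add: continuous_on_component)

lemma borel_measurable_cnj [measurable (raw)]:
  "f \<in> borel_measurable M \<Longrightarrow> (\<lambda>x. cnj (f x)) \<in> borel_measurable M"
  using borel_measurable_continuous_on[OF continuous_on_cnj[OF continuous_on_id]] .

lemma borel_measurable_qevol_entry:
  fixes V :: "'a::finite \<Rightarrow> 'w \<Rightarrow> complex^'n::finite^'n"
  assumes th: "th \<in> measurable M M" and V: "\<And>a. V a \<in> borel_measurable M"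
    and X: "\<And>r s. (\<lambda>w. X w $ r $ s) \<in> borel_measurable M"
  shows "(\<lambda>w. qevol V th w n u (X w) $ r $ s) \<in> borel_measurable M"
  using X
proof (induction u arbitrary: n X r s)
  case (Cons a u)
  have "V a \<circ> th ^^ Suc n \<in> borel_measurable M"
    using measurable_comp[OF measurable_funpow[OF th] V] .
  then have [measurable]: "(\<lambda>w. V a ((th ^^ Suc n) w) $ i $ j) \<in> borel_measurable M" for i j
    by (auto dest: borel_measurable_matrix_entry simp: comp_def)
  note [measurable] = Cons.prems
  have "(\<lambda>w. kraus V a ((th ^^ Suc n) w) (X w) $ r $ s) \<in> borel_measurable M" for r s
    unfolding kraus_def cadj_def matrix_matrix_mult_def by (simp del: funpow.simps, measurable)
  then show ?case by (simp add: Cons.IH del: funpow.simps)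
qed simp

lemma borel_measurable_qlaw:
  fixes V :: "'a::finite \<Rightarrow> 'w \<Rightarrow> complex^'n::finite^'n"
  assumes "th \<in> measurable M M" and "\<And>a. V a \<in> borel_measurable M"
  shows "(\<lambda>w. qlaw V th rho w u) \<in> borel_measurable M"
proof -
  note [measurable] = borel_measurable_qevol_entry[OF assms, of "\<lambda>_. rho"]
  show ?thesis
    unfolding qlaw_def ctrace_def by measurable
qed

definition word_law :: "('a \<Rightarrow> 'w \<Rightarrow> complex^'n^'n) \<Rightarrow> ('w \<Rightarrow> 'w) \<Rightarrow> complex^'n^'n \<Rightarrow> 'w \<Rightarrow> nat \<Rightarrow> 'a list pmf" where
  "word_law V th rho w L = embed_pmf (\<lambda>u. if u \<in> words L then qlaw V th rho w u else 0)"

context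
  fixes V :: "'a::finite \<Rightarrow> 'w \<Rightarrow> complex^'n::finite^'n" and e :: "'n \<Rightarrow> complex^'n"
    and th i w L
  assumes normalized: "(\<Sum>u\<in>words L. qlaw V th (proj (e i)) w u) = 1"
begin

lemma pmf_word_law:
  "pmf (word_law V th (proj (e i)) w L) u = (if u \<in> words L then qlaw V th (proj (e i)) w u else 0)"
  unfolding word_law_def
  by (rule pmf_embed_pmf_finite[where S = "words L"]) (simp_all add: finite_words qlaw_proj_nonneg normalized)

lemma set_pmf_word_law: "set_pmf (word_law V th (proj (e i)) w L) \<subseteq> words L"
  by (auto simp: set_pmf_iff pmf_word_law split: if_splits)

lemma pmf_map_word_law: "pmf (map_pmf (\<lambda>u. fword f u i) (word_law V th (proj (e i)) w L)) = Pbar V th e f L w i"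
proof
  fix k
  have "{u. fword f u i = k} \<inter> words L = {u\<in>words L. fword f u i = k}" by auto
  then show "pmf (map_pmf (\<lambda>u. fword f u i) (word_law V th (proj (e i)) w L)) k = Pbar V th e f L w i k"
    by (simp add: pmf_map vimage_def measure_pmf_finite_support[OF set_pmf_word_law finite_words]
        pmf_word_law Pbar_def)
qed

end

(* The case distinction only makes quenched_coupling a total measurable family; by trace
   preservation its condition holds almost surely. *)
definition quenched_coupling :: "('a::finite \<Rightarrow> 'w \<Rightarrow> complex^'n::finite^'n) \<Rightarrow> ('w \<Rightarrow> 'w)
    \<Rightarrow> ('n \<Rightarrow> complex^'n) \<Rightarrow> ('a \<Rightarrow> 'n \<Rightarrow> 'n) \<Rightarrow> nat \<Rightarrow> 'n \<Rightarrow> 'n \<Rightarrow> 'w \<Rightarrow> ('a list \<times> 'a list) pmf" where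
  "quenched_coupling V th e f L i j w =
     (if (\<Sum>u\<in>words L. qlaw V th (proj (e i)) w u) = 1 \<and> (\<Sum>u\<in>words L. qlaw V th (proj (e j)) w u) = 1
      then max_fibre_coupling (\<lambda>u. fword f u i) (word_law V th (proj (e i)) w L)
             (\<lambda>v. fword f v j) (word_law V th (proj (e j)) w L)
      else return_pmf (replicate L undefined, replicate L undefined))"

context
  fixes V :: "'a::finite \<Rightarrow> 'w \<Rightarrow> complex^'n::finite^'n" and e :: "'n \<Rightarrow> complex^'n"
    and f :: "'a \<Rightarrow> 'n \<Rightarrow> 'n" and th L i j w
  assumes normalized_i: "(\<Sum>u\<in>words L. qlaw V th (proj (e i)) w u) = 1"
    and normalized_j: "(\<Sum>u\<in>words L. qlaw V th (proj (e j)) w u) = 1"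
begin

lemma map_fst_quenched_coupling:
  "map_pmf fst (quenched_coupling V th e f L i j w) = word_law V th (proj (e i)) w L"
  by (simp add: quenched_coupling_def normalized_i normalized_j map_fst_max_fibre_coupling)

lemma map_snd_quenched_coupling:
  "map_pmf snd (quenched_coupling V th e f L i j w) = word_law V th (proj (e j)) w L"
  by (simp add: quenched_coupling_def normalized_i normalized_j map_snd_max_fibre_coupling)

lemma overlap_le_quenched_coupling:
  "overlap (Pbar V th e f L w i) (Pbar V th e f L w j)
     \<le> measure_pmf.prob (quenched_coupling V th e f L i j w) {(u, v). fword f u i = fword f v j}"
  using overlap_le_max_fibre_coupling[of "\<lambda>u. fword f u i" "word_law V th (proj (e i)) w L"
      "\<lambda>v. fword f v j" "word_law V th (proj (e j)) w L"]
  by (simp add: quenched_coupling_def normalized_i normalized_j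
      pmf_map_word_law)

end

lemma set_pmf_quenched_coupling:
  "set_pmf (quenched_coupling V th e f L i j w) \<subseteq> words L \<times> words L"
proof (cases "(\<Sum>u\<in>words L. qlaw V th (proj (e i)) w u) = 1 \<and> (\<Sum>u\<in>words L. qlaw V th (proj (e j)) w u) = 1")
  case True
  let ?K = "quenched_coupling V th e f L i j w"
  have "set_pmf ?K \<subseteq> set_pmf (map_pmf fst ?K) \<times> set_pmf (map_pmf snd ?K)"
    by force
  then show ?thesis
    using True set_pmf_word_law by (fastforce simp: map_fst_quenched_coupling map_snd_quenched_coupling)
qed (auto simp: quenched_coupling_def words_def)

lemma borel_measurable_pmf_quenched_coupling:
  fixes V :: "'a::finite \<Rightarrow> 'w \<Rightarrow> complex^'n::finite^'n"
  assumes "th \<in> measurable M M" and "\<And>a. V a \<in> borel_measurable M"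
  shows "(\<lambda>w. pmf (quenched_coupling V th e f L i j w) x) \<in> borel_measurable M"
proof -
  obtain u v where x: "x = (u, v)" by (cases x)
  note [measurable] = borel_measurable_qlaw[OF assms]
  have pmf_eq: "pmf (quenched_coupling V th e f L i j w) (u, v) =
     (if (\<Sum>u\<in>words L. qlaw V th (proj (e i)) w u) = 1 \<and> (\<Sum>u\<in>words L. qlaw V th (proj (e j)) w u) = 1
      then max_coupling_weight (Pbar V th e f L w i) (Pbar V th e f L w j) (fword f u i, fword f v j)
        * ((if u \<in> words L then qlaw V th (proj (e i)) w u else 0) / Pbar V th e f L w i (fword f u i))
        * ((if v \<in> words L then qlaw V th (proj (e j)) w v else 0) / Pbar V th e f L w j (fword f v j))
      else pmf (return_pmf (replicate L undefined, replicate L undefined)) (u, v))" for w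
    by (simp add: quenched_coupling_def pmf_max_fibre_coupling pmf_word_law pmf_map_word_law
        del: pmf_return cong: if_cong)
  show ?thesis
    unfolding x pmf_eq max_coupling_weight_def overlap_def Pbar_def by measurable
qed

theorem proposition5:
  fixes M :: "'w measure"
    and th :: "'w \<Rightarrow> 'w"
    and V :: "'a::finite \<Rightarrow> 'w \<Rightarrow> complex^'n::finite^'n"
    and e :: "'n \<Rightarrow> complex^'n"
    and f :: "'a \<Rightarrow> 'n \<Rightarrow> 'n"
    and L :: nat
    and eps :: real
  assumes "prob_space M"
    and "th \<in> measurable M M" and "distr M M th = M"
    and "\<And>a. V a \<in> borel_measurable M"
    and "AE w in M. (\<Sum>a\<in>UNIV. cadj (V a w) ** V a w) = mat 1"
    and "\<And>i j. hinner (e i) (e j) = (if i = j then 1 else 0)"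
    and "\<And>a. AE w in M. (\<forall>i. \<exists>c. V a w *v e i = c *s e (f a i))
                      \<and> (\<forall>i j. i \<noteq> j \<longrightarrow> hinner (V a w *v e i) (V a w *v e j) = 0)"
    and "eps > 0"
    and "AE w in M. \<forall>i j. (\<Sum>k\<in>UNIV. min (Pbar V th e f L w i k) (Pbar V th e f L w j k)) \<ge> eps"
  shows "\<exists>\<kappa> :: 'n \<Rightarrow> 'n \<Rightarrow> 'w \<Rightarrow> ('a list \<times> 'a list) pmf.
           (\<forall>i j x. (\<lambda>w. pmf (\<kappa> i j w) x) \<in> borel_measurable M)
         \<and> (\<forall>i j w. set_pmf (\<kappa> i j w) \<subseteq> words L \<times> words L)
         \<and> (AE w in M. \<forall>i j.
               (\<forall>u\<in>words L. pmf (map_pmf fst (\<kappa> i j w)) u = qlaw V th (proj (e i)) w u)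
             \<and> (\<forall>v\<in>words L. pmf (map_pmf snd (\<kappa> i j w)) v = qlaw V th (proj (e j)) w v)
             \<and> measure_pmf.prob (\<kappa> i j w) {(u, v). fword f u i = fword f v j} \<ge> eps)"
proof (intro exI conjI allI)
  let ?\<kappa> = "quenched_coupling V th e f L"
  show "(\<lambda>w. pmf (?\<kappa> i j w) x) \<in> borel_measurable M" for i j x
    using assms(2,4) by (rule borel_measurable_pmf_quenched_coupling)
  show "set_pmf (?\<kappa> i j w) \<subseteq> words L \<times> words L" for i j w
    by (rule set_pmf_quenched_coupling)
  have "AE w in M. \<forall>i. (\<Sum>u\<in>words L. qlaw V th (proj (e i)) w u) = 1"
    using AE_funpow[OF assms(2,3,5)]
    by eventually_elim (simp add: sum_qlaw_words ctrace_proj assms(6))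
  then show "AE w in M. \<forall>i j.
               (\<forall>u\<in>words L. pmf (map_pmf fst (?\<kappa> i j w)) u = qlaw V th (proj (e i)) w u)
             \<and> (\<forall>v\<in>words L. pmf (map_pmf snd (?\<kappa> i j w)) v = qlaw V th (proj (e j)) w v)
             \<and> measure_pmf.prob (?\<kappa> i j w) {(u, v). fword f u i = fword f v j} \<ge> eps"
    using assms(9)
    by eventually_elim (auto simp: map_fst_quenched_coupling map_snd_quenched_coupling pmf_word_law
        intro: order_trans[OF _ overlap_le_quenched_coupling] simp flip: overlap_def)
qed

end
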